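(* Let $\theta,\eta\in(0,\tfrac{\pi}{4}]$ with $\theta\le\eta$, and let the qubits $A,C_1,C_2,B$ be in the state $|\Phi_\theta\rangle_{AC_1}\otimes|\Phi_\eta\rangle_{C_2B}$. Let $\{P_k\}_{k=1}^4$, $P_k=|\varphi_k\rangle\langle\varphi_k|$, be a projective measurement on $C_1C_2\cong\mathbb{C}^2\otimes\mathbb{C}^2$ with rank-one projectors. For each outcome $k$ with probability $p_k>0$, let $|\phi_k\rangle_{AB}$ be the post-measurement pure state of $AB$, and let $P_E(\phi_k)$ be twice the smallest eigenvalue of its reduced density operator on $A$ (the optimal two-party LOCC probability of converting $|\phi_k\rangle$ into a maximally entangled state). Then $$\sum_k p_k P_E(\phi_k)=2\sin^2\theta$$ (i.e. the measurement, followed by optimal LOCC between Alice and Bob, achieves the optimal entanglement concentration rate $\min\{2\sin^2\theta,2\sin^2\eta\}=2\sin^2\theta$) if and only if $$\sum_{k=1}^4\sqrt{\big(\mathrm{tr}((T_1\otimes T_2)P_k)\big)^2+\sin^2 2\theta\,\big|\mathrm{tr}((|0\rangle\langle1|\otimes T_2)P_k)\big|^2}=\cos2\theta,$$ where $T_1=\cos^2\theta|0\rangle\langle0|-\sin^2\theta|1\rangle\langle1|$ and $T_2=\cos^2\eta|0\rangle\langle0|+\sin^2\eta|1\rangle\langle1|$, with the first tensor factor acting on $C_1$ and the second on $C_2$.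
   Context: For $\lambda\in[0,\tfrac{\pi}{2}]$, $|\Phi_\lambda\rangle=\cos\lambda|00\rangle+\sin\lambda|11\rangle$. Alice holds qubit $A$, Clare holds $C_1$ (initially entangled with $A$) and $C_2$ (initially entangled with $B$), Bob holds $B$. The post-measurement state for outcome $k$ is $|\phi_k\rangle_{AB}=p_k^{-1/2}(\langle\varphi_k|_{C_1C_2}\otimes I_{AB})|\Phi_\theta\rangle_{AC_1}|\Phi_\eta\rangle_{C_2B}$ with $p_k$ the squared norm of the unnormalized vector. *)

theory Defs
  imports "HOL-Analysis.Analysis"
begin

type_synonym qubit2 = "complex ^ (2 \<times> 2)"
type_synonym op2 = "complex ^ (2 \<times> 2) ^ (2 \<times> 2)"

definition Phi :: "real \<Rightarrow> qubit2" where
  "Phi l = (\<chi> p. case p of (x, y) \<Rightarrow> if x = y then (if x = 0 then complex_of_real (cos l) else complex_of_real (sin l)) else 0)"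

definition cinner :: "complex ^ 'n \<Rightarrow> complex ^ 'n \<Rightarrow> complex" where
  "cinner u v = (\<Sum>i\<in>UNIV. cnj (u $ i) * v $ i)"

definition unit_vec :: "complex ^ 'n \<Rightarrow> bool" where
  "unit_vec v \<longleftrightarrow> cinner v v = 1"

definition proj :: "complex ^ 'n \<Rightarrow> complex ^ 'n ^ 'n" where
  "proj v = (\<chi> r c. v $ r * cnj (v $ c))"

text \<open>Kronecker product (first factor acts on the first qubit)\<close>
definition kron :: "complex ^ 2 ^ 2 \<Rightarrow> complex ^ 2 ^ 2 \<Rightarrow> op2" where
  "kron A B = (\<chi> p q. case (p, q) of ((i, j), (k, l)) \<Rightarrow> A $ i $ k * B $ j $ l)"

definition ket_bra :: "2 \<Rightarrow> 2 \<Rightarrow> complex ^ 2 ^ 2" where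
  "ket_bra a b = (\<chi> i j. if i = a \<and> j = b then 1 else 0)"

definition T1 :: "real \<Rightarrow> complex ^ 2 ^ 2" where
  "T1 th = (\<chi> i j. if i = j then (if i = 0 then complex_of_real ((cos th)\<^sup>2) else - complex_of_real ((sin th)\<^sup>2)) else 0)"

definition T2 :: "real \<Rightarrow> complex ^ 2 ^ 2" where
  "T2 et = (\<chi> i j. if i = j then (if i = 0 then complex_of_real ((cos et)\<^sup>2) else complex_of_real ((sin et)\<^sup>2)) else 0)"

text \<open>Unnormalized post-measurement vector on AB:
  (<phi|_{C1C2} tensor I_{AB}) |Phi_th>_{A C1} |Phi_et>_{C2 B}\<close>
definition post_unnorm :: "real \<Rightarrow> real \<Rightarrow> qubit2 \<Rightarrow> qubit2" where
  "post_unnorm th et v = (\<chi> p. case p of (a, b) \<Rightarrow> \<Sum>c1\<in>UNIV. \<Sum>c2\<in>UNIV.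
      cnj (v $ (c1, c2)) * (Phi th $ (a, c1)) * (Phi et $ (c2, b)))"

definition outcome_prob :: "real \<Rightarrow> real \<Rightarrow> qubit2 \<Rightarrow> real" where
  "outcome_prob th et v = (\<Sum>x\<in>UNIV. (cmod (post_unnorm th et v $ x))\<^sup>2)"

definition post_state :: "real \<Rightarrow> real \<Rightarrow> qubit2 \<Rightarrow> qubit2" where
  "post_state th et v = (\<chi> x. complex_of_real (1 / sqrt (outcome_prob th et v)) * post_unnorm th et v $ x)"

definition reduced_A :: "qubit2 \<Rightarrow> complex ^ 2 ^ 2" where
  "reduced_A w = (\<chi> a a'. \<Sum>b\<in>UNIV. w $ (a, b) * cnj (w $ (a', b)))"

definition min_eigenvalue :: "complex ^ 'n ^ 'n \<Rightarrow> real" where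
  "min_eigenvalue M = Min {r::real. \<exists>v. v \<noteq> 0 \<and> M *v v = complex_of_real r *s v}"

definition P_E :: "qubit2 \<Rightarrow> real" where
  "P_E w = 2 * min_eigenvalue (reduced_A w)"

end

theory Submission
  imports Defs
begin

text \<open>For an outcome with probability \<open>p > 0\<close>, the reduced state of A is a Hermitian
  2\<times>2 matrix of trace 1, whose smallest eigenvalue is \<open>(1 - sqrt ((a - d)\<^sup>2 + 4 \<bar>b\<bar>\<^sup>2)) / 2\<close>.
  Multiplied by \<open>p\<close>, the diagonal difference \<open>a - d\<close> becomes \<open>tr((T\<^sub>1 \<otimes> T\<^sub>2) P)\<close> and
  \<open>2 \<bar>b\<bar>\<close> becomes \<open>sin 2\<theta> \<bar>tr((|0\<rangle>\<langle>1| \<otimes> T\<^sub>2) P)\<bar>\<close>, so \<open>p P\<^sub>E = p - S\<close> with \<open>S\<close> the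
  corresponding summand of the criterion. All Schmidt coefficients are nonzero, hence every
  outcome has positive probability, and the probabilities sum to 1 by completeness of the
  measurement. Thus \<open>\<Sum> p P\<^sub>E = 1 - \<Sum> S\<close>, and \<open>1 - 2 sin\<^sup>2 \<theta> = cos 2\<theta>\<close>.\<close>

lemma UNIV_2_zero_one: "(UNIV::2 set) = {0, 1}"
proof -
  have "(2::2) = 0" by simp
  then show ?thesis using UNIV_2 by auto
qed

lemma exhaust_2_zero_one: "(i::2) = 0 \<or> i = 1"
  using UNIV_2_zero_one by blast

lemma forall_2_zero_one: "(\<forall>i::2. P i) \<longleftrightarrow> P 0 \<and> P 1"
  by (metis exhaust_2_zero_one)

lemma sum_2_zero_one: "sum f (UNIV::2 set) = f 0 + f 1"
  by (simp add: UNIV_2_zero_one)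

lemma sum_2x2: "sum f (UNIV::(2 \<times> 2) set) = f (0,0) + f (0,1) + f (1,0) + f (1,1)"
proof -
  have "sum f (UNIV::(2 \<times> 2) set) = (\<Sum>a\<in>UNIV. \<Sum>b\<in>UNIV. f (a, b))"
    unfolding UNIV_Times_UNIV[symmetric] sum.cartesian_product by simp
  then show ?thesis by (simp add: sum_2_zero_one add.assoc)
qed

lemma vec_2_eq_iff: "(v::'a^2) = w \<longleftrightarrow> v$0 = w$0 \<and> v$1 = w$1"
  unfolding vec_eq_iff forall_2_zero_one ..

lemma vec_2_eq_0_iff: "(v::'a::zero^2) = 0 \<longleftrightarrow> v$0 = 0 \<and> v$1 = 0"
  by (simp add: vec_2_eq_iff)

lemma hermitian_2x2_eigenvector_iff:
  fixes M :: "complex^2^2" and a d r :: real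
  assumes "M$0$0 = of_real a" "M$1$1 = of_real d" "M$1$0 = cnj (M$0$1)"
  shows "M *v v = of_real r *s v \<longleftrightarrow>
    of_real (a - r) * v$0 + M$0$1 * v$1 = 0 \<and> cnj (M$0$1) * v$0 + of_real (d - r) * v$1 = 0"
  using assms by (simp add: vec_2_eq_iff matrix_vector_mult_def sum_2_zero_one algebra_simps)

lemma hermitian_2x2_eigenvalue_root:
  fixes M :: "complex^2^2" and a d r :: real
  assumes M: "M$0$0 = of_real a" "M$1$1 = of_real d" "M$1$0 = cnj (M$0$1)"
    and "v \<noteq> 0" and "M *v v = of_real r *s v"
  shows "(a - r) * (d - r) = (cmod (M$0$1))^2"
proof -
  define b where "b = M$0$1"
  define x where "x = of_real (a - r) * v$0 + b * v$1"
  define y where "y = cnj b * v$0 + of_real (d - r) * v$1"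
  have "x = 0" "y = 0"
    using assms(5) unfolding hermitian_2x2_eigenvector_iff[OF M] x_def y_def b_def by simp_all
  define q where "q = complex_of_real ((a - r) * (d - r)) - b * cnj b"
  have "q * v$0 = of_real (d - r) * x - b * y" and "q * v$1 = of_real (a - r) * y - cnj b * x"
    unfolding q_def x_def y_def by (simp_all add: algebra_simps)
  then have "q * v$0 = 0" "q * v$1 = 0"
    using \<open>x = 0\<close> \<open>y = 0\<close> by simp_all
  then have "q = 0"
    using \<open>v \<noteq> 0\<close> unfolding vec_2_eq_0_iff by auto
  then show ?thesis
    unfolding q_def b_def complex_norm_square[symmetric] by (simp only: right_minus_eq of_real_eq_iff)
qed

lemma hermitian_2x2_has_eigenvalue:
  fixes M :: "complex^2^2" and a d l :: real
  assumes M: "M$0$0 = of_real a" "M$1$1 = of_real d" "M$1$0 = cnj (M$0$1)"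
    and l: "(a - l) * (d - l) = (cmod (M$0$1))^2"
  shows "\<exists>v. v \<noteq> 0 \<and> M *v v = of_real l *s v"
proof -
  define b where "b = M$0$1"
  have norm_b: "cnj b * b = of_real ((a - l) * (d - l))"
    using l complex_norm_square[of b] unfolding b_def by (metis mult.commute)
  \<comment> \<open>\<open>(b, l - a)\<close> is an eigenvector unless it vanishes, in which case \<open>M\<close> is diagonal with \<open>M$0$0 = l\<close>.\<close>
  show ?thesis
  proof (cases "b = 0 \<and> l = a")
    case True
    define v :: "complex^2" where "v = (\<chi> i. if i = 0 then 1 else 0)"
    have "v \<noteq> 0" "M *v v = of_real l *s v"
      using True unfolding hermitian_2x2_eigenvector_iff[OF M] vec_2_eq_0_iff v_def b_def by simp_all
    then show ?thesis by blast
  next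
    case False
    define v :: "complex^2" where "v = (\<chi> i. if i = 0 then b else of_real (l - a))"
    have "v \<noteq> 0" "M *v v = of_real l *s v"
      using False norm_b unfolding hermitian_2x2_eigenvector_iff[OF M] vec_2_eq_0_iff v_def b_def[symmetric]
      by (simp_all add: algebra_simps)
    then show ?thesis by blast
  qed
qed

lemma min_eigenvalue_hermitian_2x2:
  fixes M :: "complex^2^2" and a d :: real
  assumes M: "M$0$0 = of_real a" "M$1$1 = of_real d" "M$1$0 = cnj (M$0$1)"
  shows "min_eigenvalue M = (a + d - sqrt ((a - d)^2 + 4 * (cmod (M$0$1))^2)) / 2"
proof -
  define D where "D = (a - d)^2 + 4 * (cmod (M$0$1))^2"
  have "D \<ge> 0" unfolding D_def by simp
  define S where "S = {r::real. \<exists>v. v \<noteq> 0 \<and> M *v v = of_real r *s v}"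
  have root_iff: "(a - r) * (d - r) = (cmod (M$0$1))^2 \<longleftrightarrow> \<bar>2 * r - (a + d)\<bar> = sqrt D" for r
  proof -
    have "(2 * r - (a + d))^2 - D = 4 * ((a - r) * (d - r) - (cmod (M$0$1))^2)"
      unfolding D_def by (simp add: power2_eq_square algebra_simps)
    then have "(a - r) * (d - r) = (cmod (M$0$1))^2 \<longleftrightarrow> (2 * r - (a + d))^2 = D"
      by (metis eq_iff_diff_eq_0 mult_eq_0_iff zero_neq_numeral)
    also have "\<dots> \<longleftrightarrow> \<bar>2 * r - (a + d)\<bar> = sqrt D"
      using \<open>D \<ge> 0\<close> by (metis real_sqrt_pow2 real_sqrt_abs power2_abs)
    finally show ?thesis .
  qed
  define l where "l = (a + d - sqrt D) / 2"
  define l' where "l' = (a + d + sqrt D) / 2"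
  have "2 * l - (a + d) = - sqrt D"
    unfolding l_def by (simp add: field_simps)
  then have "(a - l) * (d - l) = (cmod (M$0$1))^2"
    using root_iff[of l] \<open>D \<ge> 0\<close> by simp
  then have "l \<in> S"
    unfolding S_def using hermitian_2x2_has_eigenvalue[OF M] by blast
  moreover have "r \<in> {l, l'} \<and> l \<le> r" if "r \<in> S" for r
  proof -
    obtain v where "v \<noteq> 0" "M *v v = of_real r *s v"
      using \<open>r \<in> S\<close> unfolding S_def by blast
    then have "\<bar>2 * r - (a + d)\<bar> = sqrt D"
      using hermitian_2x2_eigenvalue_root[OF M] root_iff by blast
    then have "r = l \<or> r = l'"
      unfolding l_def l'_def by (cases "2 * r - (a + d) \<ge> 0") auto
    moreover have "l \<le> l'"
      using real_sqrt_ge_zero[OF \<open>D \<ge> 0\<close>] unfolding l_def l'_def by (simp add: divide_right_mono)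
    ultimately show ?thesis by auto
  qed
  ultimately have "Min S = l"
    by (intro Min_eqI finite_subset[of S "{l, l'}"]) auto
  then show ?thesis
    unfolding min_eigenvalue_def S_def[symmetric] l_def D_def .
qed

lemma mult_cnj_eq_cmod_square: "z * cnj z = of_real ((cmod z)^2)"
  by (rule complex_norm_square[symmetric])

lemma Phi_nth:
  "Phi l $ (0,0) = of_real (cos l)" "Phi l $ (1,1) = of_real (sin l)"
  "Phi l $ (0,1) = 0" "Phi l $ (1,0) = 0"
  by (simp_all add: Phi_def)

lemma post_unnorm_nth:
  "post_unnorm th et v $ (i,j) = cnj (v$(i,j)) * Phi th $ (i,i) * Phi et $ (j,j)"
  using exhaust_2_zero_one[of i] exhaust_2_zero_one[of j]
  by (auto simp: post_unnorm_def sum_2_zero_one Phi_nth)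

lemma outcome_prob_eq:
  "outcome_prob th et v =
     (cos th)^2 * ((cos et)^2 * (cmod (v$(0,0)))^2 + (sin et)^2 * (cmod (v$(0,1)))^2)
   + (sin th)^2 * ((cos et)^2 * (cmod (v$(1,0)))^2 + (sin et)^2 * (cmod (v$(1,1)))^2)"
  by (simp add: outcome_prob_def sum_2x2 post_unnorm_nth Phi_nth norm_mult power_mult_distrib
      algebra_simps)

lemma outcome_prob_nonneg: "outcome_prob th et v \<ge> 0"
  unfolding outcome_prob_def by (simp add: sum_nonneg)

lemma trace_kron_T1_T2_proj:
  "trace (kron (T1 th) (T2 et) ** proj v) = of_real (
     (cos th)^2 * ((cos et)^2 * (cmod (v$(0,0)))^2 + (sin et)^2 * (cmod (v$(0,1)))^2)
   - (sin th)^2 * ((cos et)^2 * (cmod (v$(1,0)))^2 + (sin et)^2 * (cmod (v$(1,1)))^2))"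
  by (simp add: trace_def sum_2x2 matrix_matrix_mult_def kron_def T1_def T2_def proj_def
      mult_cnj_eq_cmod_square) (simp add: algebra_simps)

lemma trace_kron_ket_bra_T2_proj:
  "trace (kron (ket_bra 0 1) (T2 et) ** proj v) =
     of_real ((cos et)^2) * v$(1,0) * cnj (v$(0,0)) + of_real ((sin et)^2) * v$(1,1) * cnj (v$(0,1))"
  by (simp add: trace_def sum_2x2 matrix_matrix_mult_def kron_def ket_bra_def T2_def proj_def)

lemma reduced_A_hermitian: "reduced_A w $ j $ i = cnj (reduced_A w $ i $ j)"
  by (simp add: reduced_A_def mult.commute)

lemma reduced_A_post_state:
  "reduced_A (post_state th et v) $ i $ j
     = of_real (1 / outcome_prob th et v) * reduced_A (post_unnorm th et v) $ i $ j"
proof -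
  have "complex_of_real (1 / sqrt (outcome_prob th et v)) * complex_of_real (1 / sqrt (outcome_prob th et v))
      = of_real (1 / outcome_prob th et v)"
    using outcome_prob_nonneg[of th et v] by (simp add: real_sqrt_mult[symmetric] flip: of_real_mult)
  then show ?thesis
    by (simp add: reduced_A_def post_state_def sum_distrib_left algebra_simps)
qed

lemma reduced_A_post_unnorm:
  "reduced_A (post_unnorm th et v) $ 0 $ 0 =
     of_real ((cos th)^2 * ((cos et)^2 * (cmod (v$(0,0)))^2 + (sin et)^2 * (cmod (v$(0,1)))^2))"
  "reduced_A (post_unnorm th et v) $ 1 $ 1 =
     of_real ((sin th)^2 * ((cos et)^2 * (cmod (v$(1,0)))^2 + (sin et)^2 * (cmod (v$(1,1)))^2))"
  "reduced_A (post_unnorm th et v) $ 0 $ 1 =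
     of_real (cos th * sin th) * trace (kron (ket_bra 0 1) (T2 et) ** proj v)"
  by (simp_all add: reduced_A_def sum_2_zero_one post_unnorm_nth Phi_nth trace_kron_ket_bra_T2_proj
      mult_cnj_eq_cmod_square power2_eq_square algebra_simps)

lemma outcome_prob_mult_P_E:
  assumes "outcome_prob th et v > 0"
  shows "outcome_prob th et v * P_E (post_state th et v) = outcome_prob th et v
    - sqrt ((Re (trace (kron (T1 th) (T2 et) ** proj v)))\<^sup>2
            + (sin (2 * th))\<^sup>2 * (cmod (trace (kron (ket_bra 0 1) (T2 et) ** proj v)))\<^sup>2)"
proof -
  define p where "p = outcome_prob th et v"
  define x where "x = (cos th)^2 * ((cos et)^2 * (cmod (v$(0,0)))^2 + (sin et)^2 * (cmod (v$(0,1)))^2)"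
  define y where "y = (sin th)^2 * ((cos et)^2 * (cmod (v$(1,0)))^2 + (sin et)^2 * (cmod (v$(1,1)))^2)"
  define Tv where "Tv = trace (kron (ket_bra 0 1) (T2 et) ** proj v)"
  define \<rho> where "\<rho> = reduced_A (post_state th et v)"
  have "p > 0" "p = x + y"
    using assms outcome_prob_eq unfolding p_def x_def y_def by simp_all
  have R: "Re (trace (kron (T1 th) (T2 et) ** proj v)) = x - y"
    unfolding trace_kron_T1_T2_proj x_def y_def by simp
  have "\<rho>$0$0 = of_real (x / p)" "\<rho>$1$1 = of_real (y / p)"
    unfolding \<rho>_def reduced_A_post_state reduced_A_post_unnorm p_def x_def y_def by simp_all
  moreover have "\<rho>$1$0 = cnj (\<rho>$0$1)"
    unfolding \<rho>_def by (rule reduced_A_hermitian)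
  ultimately have "min_eigenvalue \<rho> = (x / p + y / p - sqrt ((x / p - y / p)^2 + 4 * (cmod (\<rho>$0$1))^2)) / 2"
    by (rule min_eigenvalue_hermitian_2x2)
  moreover have "x / p + y / p = 1"
    using \<open>p > 0\<close> \<open>p = x + y\<close> by (simp add: add_divide_distrib[symmetric])
  moreover have "(x / p - y / p)^2 + 4 * (cmod (\<rho>$0$1))^2
      = ((x - y)^2 + (sin (2 * th))^2 * (cmod Tv)^2) / p^2"
  proof -
    have cm: "cmod (\<rho>$0$1) = \<bar>cos th * sin th\<bar> * cmod Tv / p"
      unfolding \<rho>_def reduced_A_post_state reduced_A_post_unnorm p_def Tv_def
      using \<open>p > 0\<close> p_def by (simp add: norm_mult norm_divide abs_mult)
    have "(sin (2 * th))^2 = 4 * (cos th * sin th)^2"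
      by (simp add: sin_double power2_eq_square)
    then show ?thesis
      unfolding cm using \<open>p > 0\<close> by (simp add: field_simps power_mult_distrib)
  qed
  moreover have "sqrt (\<dots>) = sqrt ((x - y)^2 + (sin (2 * th))^2 * (cmod Tv)^2) / p"
    using \<open>p > 0\<close> by (simp add: real_sqrt_divide)
  ultimately have "min_eigenvalue \<rho> = (1 - sqrt ((x - y)^2 + (sin (2 * th))^2 * (cmod Tv)^2) / p) / 2"
    by simp
  then show ?thesis
    unfolding P_E_def \<rho>_def[symmetric] p_def[symmetric] R Tv_def[symmetric]
    using \<open>p > 0\<close> by (simp add: field_simps)
qed

lemma unit_vec_nonzero: "unit_vec v \<Longrightarrow> v \<noteq> 0"
  unfolding unit_vec_def cinner_def by auto

lemma outcome_prob_pos: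
  assumes "sin th \<noteq> 0" "cos th \<noteq> 0" "sin et \<noteq> 0" "cos et \<noteq> 0" and "v \<noteq> 0"
  shows "outcome_prob th et v > 0"
proof (rule ccontr)
  assume "\<not> outcome_prob th et v > 0"
  then have "outcome_prob th et v = 0"
    using outcome_prob_nonneg[of th et v] by linarith
  then have "post_unnorm th et v $ x = 0" for x
    unfolding outcome_prob_def by (cases x) (simp add: sum_nonneg_eq_0_iff)
  moreover have "Phi th $ (i,i) \<noteq> 0" "Phi et $ (i,i) \<noteq> 0" for i
    using assms exhaust_2_zero_one[of i] by (auto simp: Phi_nth)
  ultimately have "v $ (i,j) = 0" for i j
    using post_unnorm_nth[of th et v i j] by (metis complex_cnj_zero_iff mult_eq_0_iff)
  then show False
    using \<open>v \<noteq> 0\<close> by (auto simp: vec_eq_iff)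
qed

lemma sum_outcome_prob_eq_1:
  assumes "(\<Sum>k\<in>K. proj (phi k)) = mat 1"
  shows "(\<Sum>k\<in>K. outcome_prob th et (phi k)) = 1"
proof -
  have norms: "(\<Sum>k\<in>K. (cmod (phi k $ x))^2) = 1" for x
  proof -
    have "(\<Sum>k\<in>K. proj (phi k)) $ x $ x = 1"
      using assms by (simp add: mat_def)
    then have "complex_of_real (\<Sum>k\<in>K. (cmod (phi k $ x))^2) = 1"
      by (simp add: proj_def mult_cnj_eq_cmod_square)
    then show ?thesis
      by (simp only: of_real_eq_1_iff)
  qed
  have "(\<Sum>k\<in>K. outcome_prob th et (phi k))
      = (cos th)^2 * ((cos et)^2 * (\<Sum>k\<in>K. (cmod (phi k $ (0,0)))^2) + (sin et)^2 * (\<Sum>k\<in>K. (cmod (phi k $ (0,1)))^2))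
      + (sin th)^2 * ((cos et)^2 * (\<Sum>k\<in>K. (cmod (phi k $ (1,0)))^2) + (sin et)^2 * (\<Sum>k\<in>K. (cmod (phi k $ (1,1)))^2))"
    unfolding outcome_prob_eq by (simp add: sum.distrib sum_distrib_left distrib_left)
  also have "\<dots> = 1"
    by (simp add: norms)
  finally show ?thesis .
qed

theorem theorem2:
  fixes th et :: real and phi :: "nat \<Rightarrow> qubit2"
  assumes "0 < th" and "th \<le> pi / 4" and "0 < et" and "et \<le> pi / 4" and "th \<le> et"
    and "\<forall>k\<in>{1..4}. unit_vec (phi k)"
    and "(\<Sum>k\<in>{1..4::nat}. proj (phi k)) = mat 1"
  shows "(\<Sum>k\<in>{k\<in>{1..4}. outcome_prob th et (phi k) > 0}.
            outcome_prob th et (phi k) * P_E (post_state th et (phi k))) = 2 * (sin th)\<^sup>2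
    \<longleftrightarrow>
    (\<Sum>k\<in>{1..4::nat}.
        sqrt ((Re (trace (kron (T1 th) (T2 et) ** proj (phi k))))\<^sup>2
              + (sin (2 * th))\<^sup>2 * (cmod (trace (kron (ket_bra 0 1) (T2 et) ** proj (phi k))))\<^sup>2))
      = cos (2 * th)"
proof -
  define p where "p k = outcome_prob th et (phi k)" for k
  define S where "S k = sqrt ((Re (trace (kron (T1 th) (T2 et) ** proj (phi k))))\<^sup>2
    + (sin (2 * th))\<^sup>2 * (cmod (trace (kron (ket_bra 0 1) (T2 et) ** proj (phi k))))\<^sup>2)" for k
  have "sin th > 0" "cos th > 0" "sin et > 0" "cos et > 0"
    using assms(1-4) pi_gt3 by (auto intro!: sin_gt_zero cos_gt_zero_pi)
  then have "p k > 0" if "k \<in> {1..4}" for k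
    unfolding p_def using assms(6) that by (intro outcome_prob_pos unit_vec_nonzero) auto
  then have "(\<Sum>k\<in>{k\<in>{1..4}. outcome_prob th et (phi k) > 0}.
      outcome_prob th et (phi k) * P_E (post_state th et (phi k))) = (\<Sum>k\<in>{1..4::nat}. p k - S k)"
    unfolding p_def S_def by (intro sum.cong outcome_prob_mult_P_E) auto
  also have "\<dots> = 1 - sum S {1..4}"
    using sum_outcome_prob_eq_1[OF assms(7)] by (simp add: sum_subtractf p_def)
  finally show ?thesis
    unfolding S_def[symmetric] cos_double_sin by linarith
qed

end
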